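(* Let $\varpi$ be an oscillation function on $[0,R)$ that is concave and differentiable in a neighborhood of the origin, and assume: (a) $\int_0^R \varpi(r)\,\frac{dr}{r}<\infty$; (b) $\lim_{r\to0}\varpi(r)/r=+\infty$; (c) $\lim_{r\to0}\frac{\varpi(r)}{r\,\varpi'(r)}=C_1$ for some $C_1\in(1,+\infty]$. For $0<r<R$ set $$B(r)=\frac{r\int_r^{R}\frac{\varpi(s)}{s^2}\,ds}{\int_0^r\frac{\varpi(s)}{s}\,ds}.$$ Then $\lim_{r\to0}B(r)=\frac{1}{C_1-1}$ (interpreted as $0$ if $C_1=+\infty$). In particular there is a constant $C_2>0$ such that $B(r)\le C_2$ for all $r$ in some neighborhood of the origin.
   Context: An oscillation function is a real, continuous, non-decreasing function $\varpi$ defined on $[0,R)$ for some $R>0$, with $\varpi(0)=0$ and $\varpi(r)>0$ for $r>0$. "Differentiable" means pointwise differentiable at each $r>0$ in a neighborhood of the origin. *)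

theory Defs
  imports "HOL-Analysis.Analysis"
begin

definition oscillation_function :: "(real \<Rightarrow> real) \<Rightarrow> real \<Rightarrow> bool" where
  "oscillation_function w R \<longleftrightarrow> R > 0 \<and> continuous_on {0..<R} w \<and> mono_on {0..<R} w
     \<and> w 0 = 0 \<and> (\<forall>r\<in>{0<..<R}. w r > 0)"

definition Bquot :: "(real \<Rightarrow> real) \<Rightarrow> real \<Rightarrow> real \<Rightarrow> real" where
  "Bquot w R r = r * integral {r<..<R} (\<lambda>s. w s / s\<^sup>2) / integral {0<..<r} (\<lambda>s. w s / s)"

end

theory Submission
  imports Defs
begin

text \<open>Write \<open>F r = \<integral>\<^sub>0\<^sup>r w(s)/s ds\<close> and \<open>G r = \<integral>\<^sub>r\<^sup>R w(s)/s\<^sup>2 ds\<close>, so that \<open>B r = r G r / F r\<close>.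
  By (b) and l'Hopital, \<open>F r / r \<rightarrow> \<infinity>\<close>; l'Hopital applied to \<open>w / F\<close> turns (c) into
  \<open>w / F \<rightarrow> c\<close> with \<open>c = 1/C\<^sub>1 < 1\<close>. A last l'Hopital step for \<open>G / (F r / r)\<close>, whose
  quotient of derivatives is \<open>w / (F - w) = (w/F) / (1 - w/F)\<close>, gives the limit
  \<open>c / (1 - c) = 1 / (C\<^sub>1 - 1)\<close>.\<close>

lemma integral_upper_has_real_derivative:
  fixes h :: "real \<Rightarrow> real"
  assumes "h integrable_on {a..b}" "a < x" "x < b" "isCont h x"
  shows "((\<lambda>u. integral {a..u} h) has_real_derivative h x) (at x)"
proof -
  have "((\<lambda>u. integral {a..u} h) has_vector_derivative h x) (at x within ({a..b} - {}))"
    using assms by (intro integral_has_vector_derivative_continuous_at)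
       (auto intro: continuous_at_imp_continuous_within)
  then show ?thesis using assms
    by (simp add: at_within_Icc_at has_real_derivative_iff_has_vector_derivative)
qed

lemma integral_lower_has_real_derivative:
  fixes h :: "real \<Rightarrow> real"
  assumes h: "h integrable_on {a..b}" and x: "a < x" "x < b" and "isCont h x"
  shows "((\<lambda>u. integral {u..b} h) has_real_derivative - h x) (at x)"
proof -
  have "((\<lambda>u. integral {a..b} h - integral {a..u} h) has_real_derivative 0 - h x) (at x)"
    using assms by (intro derivative_intros integral_upper_has_real_derivative)
  then have D: "((\<lambda>u. integral {a..b} h - integral {a..u} h) has_real_derivative - h x) (at x)"
    by simp
  show ?thesis
  proof (rule has_field_derivative_transform_within_open[OF D, where S="{a<..<b}"])
    show "integral {a..b} h - integral {a..u} h = integral {u..b} h" if "u \<in> {a<..<b}" for u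
      using Henstock_Kurzweil_Integration.integral_combine[where a=a and c=u and b=b and f=h] that h by auto
  qed (use x in auto)
qed

lemma integrable_on_divide_ident:
  fixes f :: "real \<Rightarrow> real"
  assumes f: "f integrable_on {a..b}" and a: "0 < a"
    and cont: "continuous_on {a<..<b} f" and nonneg: "\<And>s. s \<in> {a<..<b} \<Longrightarrow> f s \<ge> 0"
  shows "(\<lambda>s. f s / s) integrable_on {a..b}"
proof -
  have "(\<lambda>s. f s / s) integrable_on {a<..<b}"
  proof (rule measurable_bounded_by_integrable_imp_integrable)
    show "(\<lambda>s. f s / s) \<in> borel_measurable (lebesgue_on {a<..<b})"
      using cont a by (intro continuous_imp_measurable_on_sets_lebesgue continuous_intros) auto
    show "(\<lambda>s. f s / a) integrable_on {a<..<b}"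
      using f by (intro integrable_on_divide) (simp add: integrable_on_open_interval_real)
    show "norm (f s / s) \<le> f s / a" if "s \<in> {a<..<b}" for s
      using nonneg[OF that] that a by (simp add: divide_left_mono)
  qed auto
  then show ?thesis by (simp add: integrable_on_open_interval_real)
qed

lemma tendsto_inverse_of_ereal_tendsto:
  fixes h :: "'a \<Rightarrow> real" and C :: ereal
  assumes lim: "((\<lambda>x. ereal (h x)) \<longlongrightarrow> C) F" and C: "C > 0"
  shows "((\<lambda>x. inverse (h x)) \<longlongrightarrow> (if C = \<infinity> then 0 else 1 / real_of_ereal C)) F"
proof (cases C)
  case (real c)
  then have "(h \<longlongrightarrow> c) F" using lim by (simp add: lim_ereal)
  then have "((\<lambda>x. inverse (h x)) \<longlongrightarrow> inverse c) F"
    using real C by (intro tendsto_inverse) auto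
  then show ?thesis using real by (simp add: inverse_eq_divide)
next
  case PInf
  then have "filterlim h at_top F" using lim by (simp add: tendsto_PInfty_eq_at_top)
  then show ?thesis using PInf by (simp add: tendsto_inverse_0_at_top)
qed (use C in auto)

lemma primitive_over_ident_at_top:
  fixes F f :: "real \<Rightarrow> real"
  assumes "(F \<longlongrightarrow> 0) (at_right 0)" "\<forall>\<^sub>F r in at_right 0. (F has_real_derivative f r) (at r)"
    and "filterlim f at_top (at_right 0)"
  shows "filterlim (\<lambda>r. F r / r) at_top (at_right 0)"
proof (rule lhopital_right_0[where f'=f and g'="\<lambda>_. 1"])
  show "\<forall>\<^sub>F r in at_right 0. (r::real) \<noteq> 0"
    using eventually_at_right_less[of 0] by eventually_elim auto
  show "\<forall>\<^sub>F r in at_right 0. ((\<lambda>r. r) has_real_derivative 1) (at r)" by simp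
qed (use assms in \<open>auto intro: tendsto_ident_at\<close>)

lemma tendsto_ratio_to_log_primitive:
  fixes w w' F :: "real \<Rightarrow> real"
  assumes "(w \<longlongrightarrow> 0) (at_right 0)" "(F \<longlongrightarrow> 0) (at_right 0)"
    and w_pos: "\<forall>\<^sub>F r in at_right 0. w r > 0" and F_nz: "\<forall>\<^sub>F r in at_right 0. F r \<noteq> 0"
    and "\<forall>\<^sub>F r in at_right 0. (w has_real_derivative w' r) (at r)"
    and "\<forall>\<^sub>F r in at_right 0. (F has_real_derivative w r / r) (at r)"
    and elasticity: "((\<lambda>r. r * w' r / w r) \<longlongrightarrow> c) (at_right 0)"
  shows "((\<lambda>r. w r / F r) \<longlongrightarrow> c) (at_right 0)"
proof (rule lhopital_right_0[where f'=w' and g'="\<lambda>r. w r / r"])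
  have r_pos: "\<forall>\<^sub>F r in at_right 0. (r::real) > 0" by (simp add: eventually_at_right_less)
  show "\<forall>\<^sub>F r in at_right 0. w r / r \<noteq> 0" using w_pos r_pos by eventually_elim auto
  show "((\<lambda>r. w' r / (w r / r)) \<longlongrightarrow> c) (at_right 0)"
    using elasticity by (rule Lim_transform_eventually)
      (use w_pos r_pos in \<open>eventually_elim, simp\<close>)
qed (use assms in auto)

lemma scaled_tail_over_primitive_tendsto:
  fixes w F G :: "real \<Rightarrow> real"
  assumes "filterlim (\<lambda>r. F r / r) at_top (at_right 0)"
    and F_pos: "\<forall>\<^sub>F r in at_right 0. F r > 0"
    and F_deriv: "\<forall>\<^sub>F r in at_right 0. (F has_real_derivative w r / r) (at r)"
    and "\<forall>\<^sub>F r in at_right 0. (G has_real_derivative - (w r / r\<^sup>2)) (at r)"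
    and wF: "((\<lambda>r. w r / F r) \<longlongrightarrow> c) (at_right 0)" and "c < 1"
  shows "((\<lambda>r. r * G r / F r) \<longlongrightarrow> c / (1 - c)) (at_right 0)"
proof -
  have r_pos: "\<forall>\<^sub>F r in at_right 0. (r::real) > 0" by (simp add: eventually_at_right_less)
  have w_lt_F: "\<forall>\<^sub>F r in at_right 0. w r < F r"
    using order_tendstoD(2)[OF wF \<open>c < 1\<close>] F_pos by eventually_elim (auto simp: field_simps)
  have "((\<lambda>r. G r / (F r / r)) \<longlongrightarrow> c / (1 - c)) (at_right 0)"
  proof (rule lhopital_right_0_at_top[where f'="\<lambda>r. - (w r / r\<^sup>2)"
        and g'="\<lambda>r. (w r / r * r - F r * 1) / (r * r)"])
    show "\<forall>\<^sub>F r in at_right 0. ((\<lambda>r. F r / r) has_real_derivative (w r / r * r - F r * 1) / (r * r)) (at r)"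
      using F_deriv r_pos by eventually_elim (rule DERIV_divide[OF _ DERIV_ident], auto)
    show "\<forall>\<^sub>F r in at_right 0. (w r / r * r - F r * 1) / (r * r) \<noteq> 0"
      using r_pos w_lt_F by eventually_elim auto
    have "((\<lambda>r. (w r / F r) / (1 - w r / F r)) \<longlongrightarrow> c / (1 - c)) (at_right 0)"
      using \<open>c < 1\<close> by (intro tendsto_intros wF) auto
    then show "((\<lambda>r. - (w r / r\<^sup>2) / ((w r / r * r - F r * 1) / (r * r))) \<longlongrightarrow> c / (1 - c)) (at_right 0)"
      by (rule Lim_transform_eventually)
        (use r_pos w_lt_F F_pos in \<open>eventually_elim, auto simp: field_simps power2_eq_square\<close>)
  qed (use assms in auto)
  then show ?thesis by (simp add: mult.commute)
qed

lemma ereal_gt_1_inverse_bounds: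
  fixes C :: ereal
  assumes "C > 1"
  defines "c \<equiv> if C = \<infinity> then 0 else 1 / real_of_ereal C"
  shows "0 \<le> c" "c < 1" "c / (1 - c) = (if C = \<infinity> then 0 else 1 / (real_of_ereal C - 1))"
proof -
  have "0 \<le> c \<and> c < 1 \<and> c / (1 - c) = (if C = \<infinity> then 0 else 1 / (real_of_ereal C - 1))"
  proof (cases C)
    case (real x) then show ?thesis using assms by (auto simp: c_def field_simps)
  qed (use assms in auto)
  then show "0 \<le> c" "c < 1" "c / (1 - c) = (if C = \<infinity> then 0 else 1 / (real_of_ereal C - 1))"
    by auto
qed

lemma oscillation_function_tendsto_0:
  assumes "oscillation_function w R"
  shows "(w \<longlongrightarrow> 0) (at_right 0)"
proof -
  have R: "R > 0" and "w 0 = 0" and cont: "continuous_on {0..<R} w"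
    using assms unfolding oscillation_function_def by auto
  have "continuous_on {0..R/2} w" by (rule continuous_on_subset[OF cont]) (use R in auto)
  then show ?thesis using continuous_on_Icc_at_rightD R \<open>w 0 = 0\<close> by fastforce
qed

lemma log_primitive_has_derivative_near_0:
  fixes w :: "real \<Rightarrow> real"
  assumes "R > 0" "continuous_on {0<..<R} w" "(\<lambda>s. w s / s) integrable_on {0..R}"
  shows "\<forall>\<^sub>F r in at_right 0.
    ((\<lambda>r. integral {0..r} (\<lambda>s. w s / s)) has_real_derivative w r / r) (at r)"
  using eventually_at_right_real[OF \<open>R > 0\<close>]
proof eventually_elim
  case (elim r)
  then have "isCont w r" using assms(2) by (simp add: continuous_on_eq_continuous_at)
  then show ?case
    using elim assms(3) by (intro integral_upper_has_real_derivative continuous_intros) auto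
qed

lemma tail_integral_has_derivative_near_0:
  fixes w :: "real \<Rightarrow> real"
  assumes "R > 0" and cont: "continuous_on {0<..<R} w" and int: "(\<lambda>s. w s / s) integrable_on {0..R}"
    and nonneg: "\<And>s. s \<in> {0<..<R} \<Longrightarrow> w s \<ge> 0"
  shows "\<forall>\<^sub>F r in at_right 0.
    ((\<lambda>r. integral {r..R} (\<lambda>s. w s / s\<^sup>2)) has_real_derivative - (w r / r\<^sup>2)) (at r)"
  using eventually_at_right_real[OF \<open>R > 0\<close>]
proof eventually_elim
  case (elim r)
  have "(\<lambda>s. w s / s) integrable_on {r/2..R}"
    using elim by (intro integrable_subinterval_real[OF int]) auto
  moreover have "continuous_on {r/2<..<R} (\<lambda>s. w s / s)"
    using elim by (intro continuous_intros continuous_on_subset[OF cont]) auto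
  ultimately have "(\<lambda>s. w s / s / s) integrable_on {r/2..R}"
    using elim nonneg by (intro integrable_on_divide_ident[where f="\<lambda>s. w s / s"]) auto
  then have "(\<lambda>s. w s / s\<^sup>2) integrable_on {r/2..R}" by (simp add: power2_eq_square)
  moreover have "isCont w r" using elim cont by (simp add: continuous_on_eq_continuous_at)
  ultimately show ?case
    using elim by (intro integral_lower_has_real_derivative continuous_intros) auto
qed

lemma scaled_tail_over_primitive_tendsto_of_elasticity:
  fixes w F G :: "real \<Rightarrow> real"
  assumes "(w \<longlongrightarrow> 0) (at_right 0)" "(F \<longlongrightarrow> 0) (at_right 0)"
    and w_pos: "\<forall>\<^sub>F r in at_right 0. w r > 0"
    and w_deriv: "\<forall>\<^sub>F r in at_right 0. (w has_real_derivative w' r) (at r)"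
    and F_deriv: "\<forall>\<^sub>F r in at_right 0. (F has_real_derivative w r / r) (at r)"
    and G_deriv: "\<forall>\<^sub>F r in at_right 0. (G has_real_derivative - (w r / r\<^sup>2)) (at r)"
    and blowup: "filterlim (\<lambda>r. w r / r) at_top (at_right 0)"
    and elasticity: "((\<lambda>r. r * w' r / w r) \<longlongrightarrow> c) (at_right 0)" and "c < 1"
  shows "((\<lambda>r. r * G r / F r) \<longlongrightarrow> c / (1 - c)) (at_right 0)"
proof -
  have F_over_r: "filterlim (\<lambda>r. F r / r) at_top (at_right 0)"
    using assms(2) F_deriv blowup by (rule primitive_over_ident_at_top)
  have F_pos: "\<forall>\<^sub>F r in at_right 0. F r > 0"
    using filterlim_at_top_dense[THEN iffD1, OF F_over_r, rule_format, of 1]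
      eventually_at_right_less[of 0]
    by eventually_elim (auto simp: field_simps)
  then have F_nz: "\<forall>\<^sub>F r in at_right 0. F r \<noteq> 0" by eventually_elim auto
  have "((\<lambda>r. w r / F r) \<longlongrightarrow> c) (at_right 0)"
    using assms(1,2) w_pos F_nz w_deriv F_deriv elasticity by (rule tendsto_ratio_to_log_primitive)
  then show ?thesis
    using \<open>c < 1\<close> by (rule scaled_tail_over_primitive_tendsto[OF F_over_r F_pos F_deriv G_deriv])
qed

theorem lemma3p1:
  fixes w :: "real \<Rightarrow> real" and R :: real and C1 :: ereal
  assumes osc: "oscillation_function w R"
    and nbhd: "\<exists>\<delta>>0. \<delta> \<le> R \<and> concave_on {0..<\<delta>} w \<and> (\<forall>r\<in>{0<..<\<delta>}. w differentiable (at r))"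
    and a: "(\<lambda>r. w r / r) integrable_on {0<..<R}"
    and b: "filterlim (\<lambda>r. w r / r) at_top (at_right 0)"
    and C1: "C1 > 1"
    and c: "((\<lambda>r. ereal (w r / (r * deriv w r))) \<longlongrightarrow> C1) (at_right 0)"
  shows "((\<lambda>r. Bquot w R r) \<longlongrightarrow> (if C1 = \<infinity> then 0 else 1 / (real_of_ereal C1 - 1))) (at_right 0)
         \<and> (\<exists>C2>0. \<forall>\<^sub>F r in at_right 0. Bquot w R r \<le> C2)"
proof -
  obtain d where d: "0 < d" and w_differentiable: "\<And>r. r \<in> {0<..<d} \<Longrightarrow> w differentiable (at r)"
    using nbhd by blast
  have R: "R > 0" and w_cont: "continuous_on {0..<R} w"
    and w_pos: "\<And>r. r \<in> {0<..<R} \<Longrightarrow> w r > 0"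
    using osc unfolding oscillation_function_def by auto
  have w_cont_open: "continuous_on {0<..<R} w" by (rule continuous_on_subset[OF w_cont]) auto
  have f_int: "(\<lambda>s. w s / s) integrable_on {0..R}"
    using a by (simp add: integrable_on_open_interval_real)
  have F_lim: "((\<lambda>r. integral {0..r} (\<lambda>s. w s / s)) \<longlongrightarrow> 0) (at_right 0)"
    using continuous_on_Icc_at_rightD[OF indefinite_integral_continuous_1[OF f_int] R] by simp
  have near_0: "\<forall>\<^sub>F r in at_right 0. r \<in> {0<..<min d R}"
    using d R by (intro eventually_at_right_real) auto
  define c where "c = (if C1 = \<infinity> then 0 else 1 / real_of_ereal C1)"
  note c_bounds = ereal_gt_1_inverse_bounds[OF C1, folded c_def]
  have "C1 > 0" using C1 by (cases C1) auto
  then have elasticity: "((\<lambda>r. r * deriv w r / w r) \<longlongrightarrow> c) (at_right 0)"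
    using tendsto_inverse_of_ereal_tendsto[OF c] by (simp add: c_def)
  have w_pos_near_0: "\<forall>\<^sub>F r in at_right 0. w r > 0"
    using near_0 by eventually_elim (use w_pos in auto)
  have w_deriv: "\<forall>\<^sub>F r in at_right 0. (w has_real_derivative deriv w r) (at r)"
    using near_0 by eventually_elim (simp add: w_differentiable DERIV_deriv_iff_real_differentiable)
  have w_nonneg: "\<And>s. s \<in> {0<..<R} \<Longrightarrow> w s \<ge> 0"
    using w_pos by (simp add: less_imp_le)
  have "((\<lambda>r. r * integral {r..R} (\<lambda>s. w s / s\<^sup>2) / integral {0..r} (\<lambda>s. w s / s))
      \<longlongrightarrow> c / (1 - c)) (at_right 0)"
    by (rule scaled_tail_over_primitive_tendsto_of_elasticity[OF
          oscillation_function_tendsto_0[OF osc] F_lim w_pos_near_0 w_deriv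
          log_primitive_has_derivative_near_0[OF R w_cont_open f_int]
          tail_integral_has_derivative_near_0[OF R w_cont_open f_int w_nonneg] b elasticity c_bounds(2)])
  then have B_lim: "((\<lambda>r. Bquot w R r) \<longlongrightarrow> c / (1 - c)) (at_right 0)"
    by (rule Lim_transform_eventually)
      (use near_0 in \<open>eventually_elim, simp add: Bquot_def integral_open_interval_real\<close>)
  moreover have "\<forall>\<^sub>F r in at_right 0. Bquot w R r \<le> c / (1 - c) + 1"
    using order_tendstoD(2)[OF B_lim, of "c / (1 - c) + 1"] by (auto elim: eventually_mono)
  moreover have "c / (1 - c) + 1 > 0"
    using c_bounds(1,2) by (simp add: add_nonneg_pos)
  ultimately show ?thesis
    unfolding c_bounds(3)[symmetric] by blast
qed

end
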